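(* Let $(G,G_{\mathrm{mtree}})$ be a strictly increasing graph. Then there is a computad $(G,\mathfrak{g}_2,s,t)$ with $|\mathfrak{g}_2|=1-\chi(\mathcal{F}_{\mathrm{Top}_1}(G))$ which presents the thin category $\overline{\mathcal{M}_1}\mathcal{F}_1(G)$ freely generated by $G$.
   Context: Graphs and their categories. - A small graph $G$ consists of a set of objects, a set of arrows, and domain and codomain maps. - $\mathcal{F}_1(G)$ is the free category on $G$, whose morphisms are paths. - $\overline{\mathcal{M}_1}\mathcal{F}_1(G)$ is its thin (preorder) reflection: the preorder on objects with $x\le y$ iff there is a path $x\to y$. - $\mathcal{F}_{\mathrm{Top}_1}(G)$ is the topological realization of $G$, and $\chi$ is the real Euler characteristic. Weak trees. - $G$ is connected if $\mathcal{F}_1(G)$ is connected. - A weak tree is a connected graph $T$ such that $\mathcal{F}_1(T)$ is thin. - A maximal weak tree of $G$ is a subgraph of $G$ that is a weak tree and is maximal among such subgraphs. Monotone and strictly increasing graphs. A monotone graph is a pair $(G,G_{\mathrm{mtree}})$ satisfying: - $G$ is a small connected graph; - $\chi(\mathcal{F}_{\mathrm{Top}_1}(G))\in\mathbb{Z}$; - $G_{\mathrm{mtree}}$ is a maximal weak tree of $G$; - for every arrow $f\colon x\to y$ of $G$, either $x\le y$ or $y\le x$, where $\le$ is the partial order of the poset $\mathcal{F}_1(G_{\mathrm{mtree}})$. An arrow $f\colon x\to y$ with $y\le x$ is called nonincreasing. A monotone graph with no nonincreasing arrows is called strictly increasing. Computads. A computad $(G,\mathfrak{g}_2,s,t)$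 is a set $\mathfrak{g}_2$ together with, for each $\alpha\in\mathfrak{g}_2$, parallel morphisms $s(\alpha),t(\alpha)$ of $\mathcal{F}_1(G)$. It presents the category obtained as the quotient of $\mathcal{F}_1(G)$ by the smallest congruence identifying $s(\alpha)$ and $t(\alpha)$. *)

theory Defs
  imports Main
begin

record ('v, 'a) graph =
  Obj  :: "'v set"
  Arr  :: "'a set"
  gdom :: "'a \<Rightarrow> 'v"
  gcod :: "'a \<Rightarrow> 'v"

definition wf_graph :: "('v, 'a) graph \<Rightarrow> bool" where
  "wf_graph G \<longleftrightarrow> (\<forall>f \<in> Arr G. gdom G f \<in> Obj G \<and> gcod G f \<in> Obj G)"

definition subgraph :: "('v, 'a) graph \<Rightarrow> ('v, 'a) graph \<Rightarrow> bool" where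
  "subgraph H G \<longleftrightarrow> wf_graph H \<and> Obj H \<subseteq> Obj G \<and> Arr H \<subseteq> Arr G \<and>
     (\<forall>f \<in> Arr H. gdom H f = gdom G f \<and> gcod H f = gcod G f)"

section \<open>The free category F_1(G): morphisms are paths (x, [f1,...,fn], y)\<close>

inductive gpath :: "('v, 'a) graph \<Rightarrow> 'v \<Rightarrow> 'a list \<Rightarrow> 'v \<Rightarrow> bool" for G where
  gpath_nil: "x \<in> Obj G \<Longrightarrow> gpath G x [] x"
| gpath_cons: "f \<in> Arr G \<Longrightarrow> gdom G f = x \<Longrightarrow> gpath G (gcod G f) fs y \<Longrightarrow> gpath G x (f # fs) y"

type_synonym ('v, 'a) mor = "'v \<times> 'a list \<times> 'v"

definition is_mor :: "('v, 'a) graph \<Rightarrow> ('v, 'a) mor \<Rightarrow> bool" where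
  "is_mor G m \<longleftrightarrow> (case m of (x, p, y) \<Rightarrow> gpath G x p y)"

definition parallel :: "('v, 'a) graph \<Rightarrow> ('v, 'a) mor \<Rightarrow> ('v, 'a) mor \<Rightarrow> bool" where
  "parallel G m n \<longleftrightarrow> is_mor G m \<and> is_mor G n \<and> fst m = fst n \<and> snd (snd m) = snd (snd n)"

text \<open>Thin reflection / preorder: x \<le> y iff there is a path x \<rightarrow> y.\<close>
definition reach :: "('v, 'a) graph \<Rightarrow> 'v \<Rightarrow> 'v \<Rightarrow> bool" where
  "reach G x y \<longleftrightarrow> (\<exists>p. gpath G x p y)"

definition connected_graph :: "('v, 'a) graph \<Rightarrow> bool" where
  "connected_graph G \<longleftrightarrow> Obj G \<noteq> {} \<and>
     (\<forall>x \<in> Obj G. \<forall>y \<in> Obj G. (\<lambda>a b. reach G a b \<or> reach G b a)\<^sup>*\<^sup>* x y)"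

definition thin_free :: "('v, 'a) graph \<Rightarrow> bool" where
  "thin_free G \<longleftrightarrow> (\<forall>x y p q. gpath G x p y \<longrightarrow> gpath G x q y \<longrightarrow> p = q)"

definition weak_tree :: "('v, 'a) graph \<Rightarrow> bool" where
  "weak_tree T \<longleftrightarrow> wf_graph T \<and> connected_graph T \<and> thin_free T"

definition maximal_weak_tree :: "('v, 'a) graph \<Rightarrow> ('v, 'a) graph \<Rightarrow> bool" where
  "maximal_weak_tree T G \<longleftrightarrow> subgraph T G \<and> weak_tree T \<and>
     (\<forall>T'. subgraph T' G \<and> weak_tree T' \<and> subgraph T T' \<longrightarrow> Obj T' = Obj T \<and> Arr T' = Arr T)"

text \<open>Combinatorial rendering: the realization of a graph is a 1-dimensional CW complex;
  for a connected graph it is homotopy equivalent to a wedge of circles indexed by the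
  arrows outside an (undirected) spanning tree.\<close>

definition uconn :: "('v, 'a) graph \<Rightarrow> 'a set \<Rightarrow> 'v \<Rightarrow> 'v \<Rightarrow> bool" where
  "uconn G T = (\<lambda>a b. \<exists>e \<in> T. (gdom G e = a \<and> gcod G e = b) \<or> (gdom G e = b \<and> gcod G e = a))\<^sup>*\<^sup>*"

definition spanning_tree :: "('v, 'a) graph \<Rightarrow> 'a set \<Rightarrow> bool" where
  "spanning_tree G T \<longleftrightarrow> T \<subseteq> Arr G \<and>
     (\<forall>x \<in> Obj G. \<forall>y \<in> Obj G. uconn G T x y) \<and>
     (\<forall>e \<in> T. \<not> uconn G (T - {e}) (gdom G e) (gcod G e))"

definition euler_char_is_int :: "('v, 'a) graph \<Rightarrow> bool" where
  "euler_char_is_int G \<longleftrightarrow> (\<exists>T. spanning_tree G T \<and> finite (Arr G - T))"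

definition euler_char :: "('v, 'a) graph \<Rightarrow> int" where
  "euler_char G = (THE \<chi>. \<exists>T. spanning_tree G T \<and> finite (Arr G - T) \<and> \<chi> = 1 - int (card (Arr G - T)))"

definition monotone_graph :: "('v, 'a) graph \<Rightarrow> ('v, 'a) graph \<Rightarrow> bool" where
  "monotone_graph G T \<longleftrightarrow> wf_graph G \<and> connected_graph G \<and> euler_char_is_int G \<and>
     maximal_weak_tree T G \<and>
     (\<forall>f \<in> Arr G. reach T (gdom G f) (gcod G f) \<or> reach T (gcod G f) (gdom G f))"

definition strictly_increasing_graph :: "('v, 'a) graph \<Rightarrow> ('v, 'a) graph \<Rightarrow> bool" where
  "strictly_increasing_graph G T \<longleftrightarrow> monotone_graph G T \<and>
     (\<forall>f \<in> Arr G. \<not> reach T (gcod G f) (gdom G f))"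

definition computad :: "('v, 'a) graph \<Rightarrow> 'c set \<Rightarrow> ('c \<Rightarrow> ('v, 'a) mor) \<Rightarrow> ('c \<Rightarrow> ('v, 'a) mor) \<Rightarrow> bool" where
  "computad G g2 s t \<longleftrightarrow> (\<forall>\<alpha> \<in> g2. parallel G (s \<alpha>) (t \<alpha>))"

inductive gen_cong :: "('v, 'a) graph \<Rightarrow> 'c set \<Rightarrow> ('c \<Rightarrow> ('v, 'a) mor) \<Rightarrow> ('c \<Rightarrow> ('v, 'a) mor)
    \<Rightarrow> ('v, 'a) mor \<Rightarrow> ('v, 'a) mor \<Rightarrow> bool" for G g2 s t where
  cong_gen: "\<alpha> \<in> g2 \<Longrightarrow> gen_cong G g2 s t (s \<alpha>) (t \<alpha>)"
| cong_refl: "is_mor G m \<Longrightarrow> gen_cong G g2 s t m m"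
| cong_sym: "gen_cong G g2 s t m n \<Longrightarrow> gen_cong G g2 s t n m"
| cong_trans: "gen_cong G g2 s t m n \<Longrightarrow> gen_cong G g2 s t n k \<Longrightarrow> gen_cong G g2 s t m k"
| cong_ctx: "gen_cong G g2 s t (x, p, y) (x, q, y) \<Longrightarrow> gpath G w a x \<Longrightarrow> gpath G y b z \<Longrightarrow>
     gen_cong G g2 s t (w, a @ p @ b, z) (w, a @ q @ b, z)"

text \<open>The computad presents the thin reflection of F_1(G) (via the canonical identity-on-objects
  functor F_1(G)/~ \<rightarrow> thin reflection) iff the generated congruence identifies
  all parallel morphisms of F_1(G) (it only ever relates parallel ones).\<close>
definition presents_thin_reflection ::
  "('v, 'a) graph \<Rightarrow> 'c set \<Rightarrow> ('c \<Rightarrow> ('v, 'a) mor) \<Rightarrow> ('c \<Rightarrow> ('v, 'a) mor) \<Rightarrow> bool" where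
  "presents_thin_reflection G g2 s t \<longleftrightarrow>
     (\<forall>m n. gen_cong G g2 s t m n \<longleftrightarrow> parallel G m n)"

end

(* If G is strictly increasing, every arrow f : x -> y of G has a path from x to y in
   the maximal weak tree T, unique because F_1(T) is thin. Imposing the relation
   "f = that path" for each arrow f outside T lets every path of G be rewritten into a
   path of T, so any two parallel paths become equal: these relations present the thin
   reflection. There are at most 1 - chi of them: T contains and connects all objects,
   and by the exchange property of spanning trees a set of arrows whose removal leaves G
   connected is no larger than the complement of a spanning tree, which has 1 - chi
   elements. The bound can be strict, since T may contain undirected cycles
   (a -> b <- c -> d <- a); the missing generators relate an identity to itself. *)
theory Submission
  imports Defs
begin

definition uconnected :: "('v, 'a) graph \<Rightarrow> 'a set \<Rightarrow> bool" where
  "uconnected G R \<longleftrightarrow> (\<forall>x \<in> Obj G. \<forall>y \<in> Obj G. uconn G R x y)"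

lemma uconn_refl [simp]: "uconn G R a a"
  by (simp add: uconn_def)

lemma uconn_edge: "e \<in> R \<Longrightarrow> uconn G R (gdom G e) (gcod G e)"
  unfolding uconn_def by (rule r_into_rtranclp) blast

lemma uconn_trans: "uconn G R a b \<Longrightarrow> uconn G R b c \<Longrightarrow> uconn G R a c"
  unfolding uconn_def by (rule rtranclp_trans)

lemma uconn_sym: "uconn G R a b \<Longrightarrow> uconn G R b a"
  unfolding uconn_def
  by (erule rtranclp_induct) (auto intro: converse_rtranclp_into_rtranclp)

lemma uconn_via:
  assumes "uconn G R a b" and "\<And>e. e \<in> R \<Longrightarrow> uconn G R' (gdom G e) (gcod G e)"
  shows "uconn G R' a b"
  using assms(1) unfolding uconn_def[of G R]
proof (induction rule: rtranclp_induct)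
  case (step b c)
  then show ?case using assms(2) uconn_trans uconn_sym by metis
qed simp

lemma uconn_mono: "uconn G R a b \<Longrightarrow> R \<subseteq> R' \<Longrightarrow> uconn G R' a b"
  by (erule uconn_via) (auto intro: uconn_edge)

lemma uconnected_mono: "uconnected G R \<Longrightarrow> R \<subseteq> R' \<Longrightarrow> uconnected G R'"
  unfolding uconnected_def by (metis uconn_mono)

lemma uconn_insert:
  assumes "uconn G (insert e R) a b"
  shows "uconn G R a b
    \<or> (uconn G R a (gdom G e) \<and> uconn G R (gcod G e) b)
    \<or> (uconn G R a (gcod G e) \<and> uconn G R (gdom G e) b)"
  using assms unfolding uconn_def[of G "insert e R"]
proof (induction rule: rtranclp_induct)
  case (step b c)
  then obtain e' where e': "e' \<in> insert e R"
    "gdom G e' = b \<and> gcod G e' = c \<or> gdom G e' = c \<and> gcod G e' = b"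
    by blast
  show ?case
  proof (cases "e' \<in> R")
    case True
    then have "uconn G R b c" using e'(2) uconn_edge uconn_sym by metis
    then show ?thesis using step.IH uconn_trans by metis
  next
    case False
    then show ?thesis using step.IH e' by auto
  qed
qed simp

lemma uconn_crossing_edge:
  assumes "uconn G R a b" and "P a" and "\<not> P b"
  shows "\<exists>e \<in> R. P (gdom G e) \<noteq> P (gcod G e)"
  using assms unfolding uconn_def
  by (induction rule: rtranclp_induct) auto

lemma uconn_insert_exchange:
  assumes "uconn G (insert c R) (gdom G e) (gcod G e)"
    and "\<not> uconn G R (gdom G e) (gcod G e)"
  shows "uconn G (insert e R) (gdom G c) (gcod G c)"
proof -
  have mono: "uconn G R a b \<Longrightarrow> uconn G (insert e R) a b" for a b
    by (erule uconn_mono) blast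
  have e: "uconn G (insert e R) (gdom G e) (gcod G e)"
    by (rule uconn_edge) simp
  from uconn_insert[OF assms(1)] assms(2) show ?thesis
    using mono e uconn_trans uconn_sym by metis
qed

definition forest :: "('v, 'a) graph \<Rightarrow> 'a set \<Rightarrow> bool" where
  "forest G R \<longleftrightarrow> (\<forall>e \<in> R. \<not> uconn G (R - {e}) (gdom G e) (gcod G e))"

lemma spanning_tree_iff: "spanning_tree G S \<longleftrightarrow> S \<subseteq> Arr G \<and> uconnected G S \<and> forest G S"
  by (simp add: spanning_tree_def uconnected_def forest_def)

lemma forest_subset:
  assumes "forest G R" and "R' \<subseteq> R"
  shows "forest G R'"
  unfolding forest_def
proof
  fix e assume "e \<in> R'"
  have "\<not> uconn G (R - {e}) (gdom G e) (gcod G e)"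
    using assms(1) \<open>e \<in> R'\<close> \<open>R' \<subseteq> R\<close> by (auto simp: forest_def)
  then show "\<not> uconn G (R' - {e}) (gdom G e) (gcod G e)"
    using uconn_mono[of G "R' - {e}" _ _ "R - {e}"] \<open>R' \<subseteq> R\<close> by blast
qed

lemma forest_insert:
  assumes R: "forest G R" and c: "\<not> uconn G R (gdom G c) (gcod G c)"
  shows "forest G (insert c R)"
  unfolding forest_def
proof
  fix e assume "e \<in> insert c R"
  show "\<not> uconn G (insert c R - {e}) (gdom G e) (gcod G e)"
  proof (cases "e = c")
    case True
    then show ?thesis using c uconn_mono[of G "insert c R - {c}" _ _ R] by blast
  next
    case False
    then have "e \<in> R" using \<open>e \<in> insert c R\<close> by simp
    then have "\<not> uconn G (R - {e}) (gdom G e) (gcod G e)" using R by (simp add: forest_def)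
    moreover have "insert e (R - {e}) = R" using \<open>e \<in> R\<close> by blast
    moreover have "insert c R - {e} = insert c (R - {e})" using False by blast
    ultimately show ?thesis using uconn_insert_exchange[of G c "R - {e}" e] c by auto
  qed
qed

lemma spanning_tree_exchange:
  assumes wf: "wf_graph G" and S: "spanning_tree G S" and "d \<in> S"
    and A: "A \<subseteq> Arr G" "uconnected G A" "d \<notin> A"
  shows "\<exists>c \<in> A - S. spanning_tree G (insert c (S - {d}))"
proof -
  define S' where "S' = S - {d}"
  have S_eq: "S = insert d S'" using \<open>d \<in> S\<close> by (auto simp: S'_def)
  have "S \<subseteq> Arr G" and S_conn: "uconnected G S" and "forest G S"
    using S by (simp_all add: spanning_tree_iff)
  then have "forest G S'" by (simp add: forest_subset S'_def)
  have ends: "gdom G f \<in> Obj G" "gcod G f \<in> Obj G" if "f \<in> Arr G" for f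
    using wf that by (auto simp: wf_graph_def)
  have "uconn G A (gdom G d) (gcod G d)"
    using A(2) ends \<open>d \<in> S\<close> \<open>S \<subseteq> Arr G\<close> by (auto simp: uconnected_def)
  moreover have "\<not> uconn G S' (gdom G d) (gcod G d)"
    using \<open>forest G S\<close> \<open>d \<in> S\<close> by (simp add: forest_def S'_def)
  ultimately obtain c where "c \<in> A"
    and cross: "uconn G S' (gdom G d) (gdom G c) \<noteq> uconn G S' (gdom G d) (gcod G c)"
    using uconn_crossing_edge[of G A "gdom G d" "gcod G d" "uconn G S' (gdom G d)"] by auto
  have c_bridge: "\<not> uconn G S' (gdom G c) (gcod G c)"
    using cross uconn_trans uconn_sym by metis
  have "c \<notin> S"
    using c_bridge uconn_edge \<open>c \<in> A\<close> A(3) by (metis S_eq insert_iff)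
  have "c \<in> Arr G" using \<open>c \<in> A\<close> A(1) by auto
  have "uconn G (insert d S') (gdom G c) (gcod G c)"
    using S_conn ends[OF \<open>c \<in> Arr G\<close>] S_eq by (simp add: uconnected_def)
  from uconn_insert_exchange[OF this c_bridge]
  have d_via_c: "uconn G (insert c S') (gdom G d) (gcod G d)" .
  have "uconnected G (insert c S')"
    unfolding uconnected_def
  proof (intro ballI)
    fix a b assume "a \<in> Obj G" "b \<in> Obj G"
    with S_conn have "uconn G S a b" by (simp add: uconnected_def)
    then show "uconn G (insert c S') a b"
      by (rule uconn_via) (use S_eq d_via_c in \<open>auto intro: uconn_edge\<close>)
  qed
  moreover have "forest G (insert c S')" using \<open>forest G S'\<close> c_bridge by (rule forest_insert)
  moreover have "insert c S' \<subseteq> Arr G" using \<open>S \<subseteq> Arr G\<close> \<open>c \<in> Arr G\<close> by (auto simp: S'_def)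
  ultimately show ?thesis
    using \<open>c \<in> A\<close> \<open>c \<notin> S\<close> unfolding spanning_tree_iff S'_def by blast
qed

text \<open>Exchanging the arrows of \<open>D \<inter> S\<close> one at a time for arrows outside \<open>D\<close>
  keeps \<open>S\<close> a spanning tree with a complement of the same size, until \<open>D\<close> lies
  in that complement.\<close>
lemma card_le_card_cotree:
  assumes wf: "wf_graph G" and D: "finite D" "D \<subseteq> Arr G" "uconnected G (Arr G - D)"
  shows "spanning_tree G S \<Longrightarrow> finite (Arr G - S) \<Longrightarrow> card D \<le> card (Arr G - S)"
proof (induction "card (D \<inter> S)" arbitrary: S rule: less_induct)
  case less
  show ?case
  proof (cases "D \<inter> S = {}")
    case True
    then have "D \<subseteq> Arr G - S" using D(2) by auto
    then show ?thesis using less.prems(2) by (rule card_mono[rotated])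
  next
    case False
    then obtain d where "d \<in> D" "d \<in> S" by blast
    then obtain c where c: "c \<in> Arr G - D - S" and S': "spanning_tree G (insert c (S - {d}))"
      using spanning_tree_exchange[OF wf less.prems(1) \<open>d \<in> S\<close> _ D(3)] by blast
    have cotree_eq: "Arr G - insert c (S - {d}) = insert d (Arr G - S - {c})"
      using c \<open>d \<in> D\<close> \<open>d \<in> S\<close> D(2) by auto
    then have fin: "finite (Arr G - insert c (S - {d}))" using less.prems(2) by simp
    have same_card: "card (Arr G - insert c (S - {d})) = card (Arr G - S)"
    proof -
      have "card (insert d (Arr G - S - {c})) = Suc (card (Arr G - S - {c}))"
        using \<open>d \<in> S\<close> less.prems(2) by simp
      also have "\<dots> = card (Arr G - S)"
        by (rule card_Suc_Diff1) (use c less.prems(2) in auto)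
      finally show ?thesis using cotree_eq by simp
    qed
    have fewer: "card (D \<inter> insert c (S - {d})) < card (D \<inter> S)"
    proof -
      have "D \<inter> insert c (S - {d}) = D \<inter> S - {d}" using c by auto
      then show ?thesis
        using card_Diff1_less[of "D \<inter> S" d] D(1) \<open>d \<in> D\<close> \<open>d \<in> S\<close> by simp
    qed
    show ?thesis using less.hyps[OF fewer S' fin] same_card by simp
  qed
qed

lemma finite_card_le_card_cotree:
  assumes wf: "wf_graph G" and S: "spanning_tree G S" "finite (Arr G - S)"
    and R: "R \<subseteq> Arr G" "uconnected G R"
  shows "finite (Arr G - R)" and "card (Arr G - R) \<le> card (Arr G - S)"
proof -
  have small: "card D \<le> card (Arr G - S)" if "D \<subseteq> Arr G - R" "finite D" for D
  proof (rule card_le_card_cotree[OF wf \<open>finite D\<close> _ _ S])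
    show "uconnected G (Arr G - D)"
      by (rule uconnected_mono[OF R(2)]) (use R(1) that(1) in auto)
  qed (use that in auto)
  show "finite (Arr G - R)"
  proof (rule ccontr)
    assume "infinite (Arr G - R)"
    then obtain D where "D \<subseteq> Arr G - R" "finite D" "card D = Suc (card (Arr G - S))"
      using infinite_arbitrarily_large by blast
    then show False using small[of D] by simp
  qed
  then show "card (Arr G - R) \<le> card (Arr G - S)" using small[of "Arr G - R"] by simp
qed

lemma euler_char_eq:
  assumes "wf_graph G" and "spanning_tree G S" and "finite (Arr G - S)"
  shows "euler_char G = 1 - int (card (Arr G - S))"
  unfolding euler_char_def
proof (rule the_equality)
  fix \<chi>
  assume "\<exists>S'. spanning_tree G S' \<and> finite (Arr G - S') \<and> \<chi> = 1 - int (card (Arr G - S'))"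
  then obtain S' where S': "spanning_tree G S'" "finite (Arr G - S')"
    and "\<chi> = 1 - int (card (Arr G - S'))" by blast
  moreover have "card (Arr G - S') \<le> card (Arr G - S)"
    using finite_card_le_card_cotree(2)[OF assms] S'(1) by (simp add: spanning_tree_iff)
  moreover have "card (Arr G - S) \<le> card (Arr G - S')"
    using finite_card_le_card_cotree(2)[OF assms(1) S'] assms(2) by (simp add: spanning_tree_iff)
  ultimately show "\<chi> = 1 - int (card (Arr G - S))" by simp
qed (use assms in blast)

lemma gpath_ends:
  assumes "wf_graph G"
  shows "gpath G x p y \<Longrightarrow> x \<in> Obj G \<and> y \<in> Obj G"
  by (induction rule: gpath.induct) (use assms in \<open>auto simp: wf_graph_def\<close>)

lemma gpath_arrow: "wf_graph G \<Longrightarrow> f \<in> Arr G \<Longrightarrow> gpath G (gdom G f) [f] (gcod G f)"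
  by (auto simp: wf_graph_def intro!: gpath.intros)

lemma gpath_append: "gpath G x p y \<Longrightarrow> gpath G y q z \<Longrightarrow> gpath G x (p @ q) z"
  by (induction rule: gpath.induct) (auto intro: gpath.intros)

lemma gpath_subgraph: "subgraph T G \<Longrightarrow> gpath T x p y \<Longrightarrow> gpath G x p y"
  by (erule gpath.induct) (auto simp: subgraph_def intro: gpath.intros)

lemma gpath_uconn:
  assumes "subgraph T G"
  shows "gpath T x p y \<Longrightarrow> uconn G (Arr T) x y"
proof (induction rule: gpath.induct)
  case (gpath_cons f x fs y)
  then have "uconn G (Arr T) x (gcod T f)"
    using assms uconn_edge[of f "Arr T" G] by (simp add: subgraph_def)
  then show ?case using gpath_cons.IH by (rule uconn_trans)
qed simp

lemma connected_subgraph_uconn: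
  assumes "connected_graph T" "subgraph T G" "x \<in> Obj T" "y \<in> Obj T"
  shows "uconn G (Arr T) x y"
proof -
  have "(\<lambda>a b. reach T a b \<or> reach T b a)\<^sup>*\<^sup>* x y"
    using assms by (simp add: connected_graph_def)
  then show ?thesis
  proof (induction rule: rtranclp_induct)
    case (step b c)
    then have "uconn G (Arr T) b c"
      using gpath_uconn[OF assms(2)] uconn_sym by (metis reach_def)
    with step.IH show ?case by (rule uconn_trans)
  qed simp
qed

lemma monotone_graph_Obj_tree:
  assumes "monotone_graph G T"
  shows "Obj T = Obj G"
proof
  have T: "subgraph T G" "wf_graph T" "connected_graph T"
    using assms by (auto simp: monotone_graph_def maximal_weak_tree_def weak_tree_def)
  show "Obj T \<subseteq> Obj G" using T(1) by (simp add: subgraph_def)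
  have ends: "gdom G f \<in> Obj T \<and> gcod G f \<in> Obj T" if "f \<in> Arr G" for f
    using assms that gpath_ends[OF T(2)] by (fastforce simp: monotone_graph_def reach_def)
  have path: "gpath G b p c \<Longrightarrow> b \<in> Obj T \<longleftrightarrow> c \<in> Obj T" for b p c
    by (induction rule: gpath.induct) (use ends in auto)
  obtain t\<^sub>0 where "t\<^sub>0 \<in> Obj T" using T(3) by (auto simp: connected_graph_def)
  show "Obj G \<subseteq> Obj T"
  proof
    fix x assume "x \<in> Obj G"
    with \<open>t\<^sub>0 \<in> Obj T\<close> T(1) assms
    have "(\<lambda>a b. reach G a b \<or> reach G b a)\<^sup>*\<^sup>* t\<^sub>0 x"
      by (auto simp: monotone_graph_def connected_graph_def subgraph_def)
    then show "x \<in> Obj T"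
      by (induction rule: rtranclp_induct)
        (use \<open>t\<^sub>0 \<in> Obj T\<close> path in \<open>auto simp: reach_def\<close>)
  qed
qed

lemma gen_cong_parallel:
  assumes "computad G g2 s t"
  shows "gen_cong G g2 s t m n \<Longrightarrow> parallel G m n"
proof (induction rule: gen_cong.induct)
  case (cong_ctx x p y q w a b z)
  then have "gpath G x p y" "gpath G x q y" by (auto simp: parallel_def is_mor_def)
  with cong_ctx.hyps(2,3) show ?case
    by (auto simp: parallel_def is_mor_def intro!: gpath_append)
qed (use assms in \<open>auto simp: computad_def parallel_def\<close>)

lemma gen_cong_prepend:
  "gen_cong G g2 s t (y, p, z) (y, q, z) \<Longrightarrow> gpath G x a y \<Longrightarrow> z \<in> Obj G
    \<Longrightarrow> gen_cong G g2 s t (x, a @ p, z) (x, a @ q, z)"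
  using gen_cong.cong_ctx[of G g2 s t y p z q x a "[]" z] by (simp add: gpath.gpath_nil)

lemma gen_cong_append:
  "gen_cong G g2 s t (x, p, y) (x, q, y) \<Longrightarrow> x \<in> Obj G \<Longrightarrow> gpath G y b z
    \<Longrightarrow> gen_cong G g2 s t (x, p @ b, z) (x, q @ b, z)"
  using gen_cong.cong_ctx[of G g2 s t x p y q x "[]" b z] by (simp add: gpath.gpath_nil)

lemma gen_cong_tree_path:
  assumes T: "subgraph T G" "Obj G \<subseteq> Obj T" and wf: "wf_graph G"
    and arrow: "\<And>f. f \<in> Arr G - Arr T \<Longrightarrow> \<exists>q. gpath T (gdom G f) q (gcod G f)
                   \<and> gen_cong G g2 s t (gdom G f, [f], gcod G f) (gdom G f, q, gcod G f)"
  shows "gpath G x p y \<Longrightarrow> \<exists>r. gpath T x r y \<and> gen_cong G g2 s t (x, p, y) (x, r, y)"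
proof (induction rule: gpath.induct)
  case (gpath_nil x)
  then have "gpath T x [] x" "gen_cong G g2 s t (x, [], x) (x, [], x)"
    using T(2) by (auto intro!: gpath.gpath_nil gen_cong.cong_refl simp: is_mor_def)
  then show ?case by blast
next
  case (gpath_cons f x fs y)
  then obtain r where r: "gpath T (gcod G f) r y"
    and fs_r: "gen_cong G g2 s t (gcod G f, fs, y) (gcod G f, r, y)" by blast
  have "x \<in> Obj G" "y \<in> Obj G"
    using gpath_ends[OF wf gpath.gpath_cons[OF gpath_cons.hyps]] by auto
  have f: "gpath G x [f] (gcod G f)"
    using gpath_arrow[OF wf] gpath_cons.hyps by blast
  have f_fs: "gen_cong G g2 s t (x, f # fs, y) (x, f # r, y)"
    using gen_cong_prepend[OF fs_r f \<open>y \<in> Obj G\<close>] by simp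
  show ?case
  proof (cases "f \<in> Arr T")
    case True
    then have "gpath T x (f # r) y"
      using T(1) gpath_cons.hyps r by (auto simp: subgraph_def intro: gpath.gpath_cons)
    with f_fs show ?thesis by blast
  next
    case False
    then obtain q where q: "gpath T x q (gcod G f)"
      and f_q: "gen_cong G g2 s t (x, [f], gcod G f) (x, q, gcod G f)"
      using arrow gpath_cons.hyps by blast
    have "gen_cong G g2 s t (x, f # r, y) (x, q @ r, y)"
      using gen_cong_append[OF f_q \<open>x \<in> Obj G\<close> gpath_subgraph[OF T(1) r]] by simp
    moreover have "gpath T x (q @ r) y" using q r by (rule gpath_append)
    ultimately show ?thesis using f_fs by (blast intro: gen_cong.cong_trans)
  qed
qed

lemma presents_thin_reflection_via_tree:
  assumes "computad G g2 s t" and "thin_free T"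
    and reduce: "\<And>x p y. gpath G x p y
                   \<Longrightarrow> \<exists>r. gpath T x r y \<and> gen_cong G g2 s t (x, p, y) (x, r, y)"
  shows "presents_thin_reflection G g2 s t"
  unfolding presents_thin_reflection_def
proof (intro allI iffI)
  fix m n assume "gen_cong G g2 s t m n"
  then show "parallel G m n" by (rule gen_cong_parallel[OF assms(1)])
next
  fix m n assume "parallel G m n"
  then obtain x p q y where mn: "m = (x, p, y)" "n = (x, q, y)" and "gpath G x p y" "gpath G x q y"
    by (cases m, cases n) (auto simp: parallel_def is_mor_def)
  then obtain r r' where "gpath T x r y" "gen_cong G g2 s t (x, p, y) (x, r, y)"
    and "gpath T x r' y" "gen_cong G g2 s t (x, q, y) (x, r', y)"
    using reduce by meson
  moreover from this have "r = r'" using \<open>thin_free T\<close> by (auto simp: thin_free_def)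
  ultimately show "gen_cong G g2 s t m n"
    unfolding mn by (metis gen_cong.cong_sym gen_cong.cong_trans)
qed

lemma computad_on_initial_segment:
  assumes "finite D" "card D \<le> N" "x\<^sub>0 \<in> Obj G"
    and par: "\<And>f. f \<in> D \<Longrightarrow> parallel G (s\<^sub>0 f) (t\<^sub>0 f)"
  shows "\<exists>s t. computad G {0..<N} s t
           \<and> (\<forall>f \<in> D. \<exists>i \<in> {0..<N}. s i = s\<^sub>0 f \<and> t i = t\<^sub>0 f)"
proof -
  obtain h where h: "bij_betw h {0..<card D} D"
    using ex_bij_betw_nat_finite[OF assms(1)] by blast
  define s where "s i = (if i < card D then s\<^sub>0 (h i) else (x\<^sub>0, [], x\<^sub>0))" for i
  define t where "t i = (if i < card D then t\<^sub>0 (h i) else (x\<^sub>0, [], x\<^sub>0))" for i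
  have "computad G {0..<N} s t"
    using par bij_betw_apply[OF h] assms(3)
    by (auto simp: computad_def s_def t_def parallel_def is_mor_def intro: gpath.gpath_nil)
  moreover have "\<forall>f \<in> D. \<exists>i \<in> {0..<N}. s i = s\<^sub>0 f \<and> t i = t\<^sub>0 f"
  proof
    fix f assume "f \<in> D"
    then obtain i where "i < card D" "f = h i"
      using h by (metis atLeastLessThan_iff bij_betw_iff_bijections)
    then show "\<exists>i \<in> {0..<N}. s i = s\<^sub>0 f \<and> t i = t\<^sub>0 f"
      using assms(2) by (auto simp: s_def t_def)
  qed
  ultimately show ?thesis by blast
qed

lemma tree_relations_present_thin_reflection:
  assumes wf: "wf_graph G" and "Obj G \<noteq> {}"
    and T: "subgraph T G" "Obj G \<subseteq> Obj T" "thin_free T"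
    and increasing: "\<And>f. f \<in> Arr G \<Longrightarrow> reach T (gdom G f) (gcod G f)"
    and D: "finite (Arr G - Arr T)" "card (Arr G - Arr T) \<le> N"
  shows "\<exists>s t. computad G {0..<N} s t \<and> presents_thin_reflection G {0..<N} s t"
proof -
  define \<tau> where "\<tau> f = (SOME q. gpath T (gdom G f) q (gcod G f))" for f
  have \<tau>: "gpath T (gdom G f) (\<tau> f) (gcod G f)" if "f \<in> Arr G" for f
    using increasing[OF that] unfolding \<tau>_def reach_def by (rule someI_ex)
  have par: "parallel G (gdom G f, [f], gcod G f) (gdom G f, \<tau> f, gcod G f)"
    if "f \<in> Arr G - Arr T" for f
    using gpath_arrow[OF wf] gpath_subgraph[OF T(1) \<tau>] that by (simp add: parallel_def is_mor_def)
  obtain x\<^sub>0 where "x\<^sub>0 \<in> Obj G" using \<open>Obj G \<noteq> {}\<close> by blast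
  then obtain s t where comp: "computad G {0..<N} s t" and gens: "\<forall>f \<in> Arr G - Arr T.
      \<exists>i \<in> {0..<N}. s i = (gdom G f, [f], gcod G f) \<and> t i = (gdom G f, \<tau> f, gcod G f)"
    using computad_on_initial_segment[where s\<^sub>0 = "\<lambda>f. (gdom G f, [f], gcod G f)"
        and t\<^sub>0 = "\<lambda>f. (gdom G f, \<tau> f, gcod G f)", OF D _ par] by blast
  have arrow: "\<exists>q. gpath T (gdom G f) q (gcod G f)
      \<and> gen_cong G {0..<N} s t (gdom G f, [f], gcod G f) (gdom G f, q, gcod G f)"
    if f: "f \<in> Arr G - Arr T" for f
  proof -
    obtain i where "i \<in> {0..<N}"
      and "s i = (gdom G f, [f], gcod G f)" "t i = (gdom G f, \<tau> f, gcod G f)"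
      using gens f by blast
    then have "gen_cong G {0..<N} s t (gdom G f, [f], gcod G f) (gdom G f, \<tau> f, gcod G f)"
      using gen_cong.cong_gen[of i "{0..<N}" G s t] by simp
    then show ?thesis using \<tau> f by blast
  qed
  have "presents_thin_reflection G {0..<N} s t"
    using presents_thin_reflection_via_tree[OF comp T(3) gen_cong_tree_path[OF T(1,2) wf arrow]] .
  with comp show ?thesis by blast
qed

theorem mainTheorem14:
  fixes G T :: "('v, 'a) graph"
  assumes "strictly_increasing_graph G T"
  shows "\<exists>(g2 :: nat set) s t. computad G g2 s t \<and> finite g2 \<and>
           int (card g2) = 1 - euler_char G \<and> presents_thin_reflection G g2 s t"
proof -
  from assms have mono: "monotone_graph G T"
    and increasing: "\<And>f. f \<in> Arr G \<Longrightarrow> reach T (gdom G f) (gcod G f)"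
    by (auto simp: strictly_increasing_graph_def monotone_graph_def)
  then have wf: "wf_graph G" and "Obj G \<noteq> {}" and "euler_char_is_int G"
    and T: "subgraph T G" "connected_graph T" "thin_free T"
    by (auto simp: monotone_graph_def maximal_weak_tree_def weak_tree_def connected_graph_def)
  then obtain S where S: "spanning_tree G S" "finite (Arr G - S)"
    by (auto simp: euler_char_is_int_def)
  have Obj_T: "Obj T = Obj G" using mono by (rule monotone_graph_Obj_tree)
  then have "uconnected G (Arr T)"
    using connected_subgraph_uconn[OF T(2,1)] by (simp add: uconnected_def)
  then have "finite (Arr G - Arr T)" "card (Arr G - Arr T) \<le> card (Arr G - S)"
    using finite_card_le_card_cotree[OF wf S] T(1) by (auto simp: subgraph_def)
  then obtain s t where "computad G {0..<card (Arr G - S)} s t"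
    and "presents_thin_reflection G {0..<card (Arr G - S)} s t"
    using tree_relations_present_thin_reflection[OF wf \<open>Obj G \<noteq> {}\<close> T(1) _ T(3) increasing]
      Obj_T by blast
  moreover have "int (card {0..<card (Arr G - S)}) = 1 - euler_char G"
    using euler_char_eq[OF wf S] by simp
  ultimately show ?thesis by blast
qed

end
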